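(* For every $\beta,c\ge0$ and $N\in\mathbb N$, $$\mathcal P(\beta,c)-p_N(\beta,c)=\frac12\sum_{R=1}^\infty\frac{(1-e^{-\beta})^R}{R}\sum_{s\in[q]^R}\int_0^c\Big\langle\!\Big\langle\big(\rho_{\Sigma_R}(s)-q^{-R}\big)^2\Big\rangle\!\Big\rangle_{N,\beta,c'}\,dc'.$$ In particular $p_N(\beta,c)\le\mathcal P(\beta,c)$.
   Context: Fix an integer $q\ge2$, $[q]=\{1,\dots,q\}$. For $\sigma\in[q]^N$ and a real $N\times N$ matrix $J$, $H_N(\sigma,J)=\sum_{i,j=1}^N J_{ij}\delta(\sigma_i,\sigma_j)$ ($\delta$ the Kronecker delta), $Z_N(J)=\sum_{\sigma\in[q]^N}e^{-H_N(\sigma,J)}$, $\omega_{N,J}(\sigma)=e^{-H_N(\sigma,J)}/Z_N(J)$. For $c\ge0$, $\mathbb P_{N,c}$ is the law of a random $N\times N$ matrix $J$ with independent entries each Poisson with mean $c/(2N)$, expectation $\mathbb E_{N,c}$; $p_N(\beta,c)=\mathbb E_{N,c}[N^{-1}\ln Z_N(\beta J)]$. The annealed pressure is $\mathcal P(\beta,c)=\ln q+\frac c2\ln\big(1-\frac{1-e^{-\beta}}{q}\big)$. For $R\in\mathbb N$ and $R$ replicas $\Sigma_R=(\sigma^{(1)},\dots,\sigma^{(R)})\in([q]^N)^R$, the empirical measure is $\rho_{\Sigma_R}(s)=\frac1N\sum_{i=1}^N\prod_{r=1}^R\delta(\sigma^{(r)}_i,s_r)$ for $s=(s_1,\dots,s_R)\in[q]^R$.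 For $F:([q]^N)^R\to\mathbb R$, $\langle\!\langle F\rangle\!\rangle_{N,\beta,c}=\mathbb E_{N,c}\big[\sum_{\sigma^{(1)},\dots,\sigma^{(R)}}F(\sigma^{(1)},\dots,\sigma^{(R)})\prod_{r=1}^R\omega_{N,\beta J}(\sigma^{(r)})\big]$. *)

theory Defs
  imports "HOL-Probability.Probability"
begin

definition configs :: "nat \<Rightarrow> nat \<Rightarrow> (nat \<Rightarrow> nat) set" where
  "configs q N = PiE {..<N} (\<lambda>_. {1..q})"

definition kdelta :: "nat \<Rightarrow> nat \<Rightarrow> real" where
  "kdelta a b = (if a = b then 1 else 0)"

definition hamiltonian :: "nat \<Rightarrow> (nat \<Rightarrow> nat) \<Rightarrow> (nat \<times> nat \<Rightarrow> real) \<Rightarrow> real" where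
  "hamiltonian N \<sigma> J = (\<Sum>i<N. \<Sum>j<N. J (i, j) * kdelta (\<sigma> i) (\<sigma> j))"

definition partition_fn :: "nat \<Rightarrow> nat \<Rightarrow> (nat \<times> nat \<Rightarrow> real) \<Rightarrow> real" where
  "partition_fn q N J = (\<Sum>\<sigma>\<in>configs q N. exp (- hamiltonian N \<sigma> J))"

definition gibbs :: "nat \<Rightarrow> nat \<Rightarrow> (nat \<times> nat \<Rightarrow> real) \<Rightarrow> (nat \<Rightarrow> nat) \<Rightarrow> real" where
  "gibbs q N J \<sigma> = exp (- hamiltonian N \<sigma> J) / partition_fn q N J"

definition poisson_dist :: "real \<Rightarrow> nat pmf" where
  "poisson_dist rate = (if 0 < rate then poisson_pmf rate else return_pmf 0)"

definition J_law :: "nat \<Rightarrow> real \<Rightarrow> (nat \<times> nat \<Rightarrow> nat) pmf" where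
  "J_law N c = Pi_pmf ({..<N} \<times> {..<N}) 0 (\<lambda>_. poisson_dist (c / (2 * real N)))"

definition E_Nc :: "nat \<Rightarrow> real \<Rightarrow> ((nat \<times> nat \<Rightarrow> nat) \<Rightarrow> real) \<Rightarrow> real" where
  "E_Nc N c f = measure_pmf.expectation (J_law N c) f"

definition scaled :: "real \<Rightarrow> (nat \<times> nat \<Rightarrow> nat) \<Rightarrow> (nat \<times> nat \<Rightarrow> real)" where
  "scaled \<beta> J = (\<lambda>ij. \<beta> * real (J ij))"

definition pressure :: "nat \<Rightarrow> nat \<Rightarrow> real \<Rightarrow> real \<Rightarrow> real" where
  "pressure q N \<beta> c = E_Nc N c (\<lambda>J. ln (partition_fn q N (scaled \<beta> J)) / real N)"

definition annealed_pressure :: "nat \<Rightarrow> real \<Rightarrow> real \<Rightarrow> real" where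
  "annealed_pressure q \<beta> c = ln (real q) + c / 2 * ln (1 - (1 - exp (- \<beta>)) / real q)"

definition replicas :: "nat \<Rightarrow> nat \<Rightarrow> nat \<Rightarrow> (nat \<Rightarrow> nat \<Rightarrow> nat) set" where
  "replicas q N R = PiE {..<R} (\<lambda>_. configs q N)"

definition emp_measure :: "nat \<Rightarrow> nat \<Rightarrow> (nat \<Rightarrow> nat \<Rightarrow> nat) \<Rightarrow> (nat \<Rightarrow> nat) \<Rightarrow> real" where
  "emp_measure N R \<Sigma> s = (1 / real N) * (\<Sum>i<N. \<Prod>r<R. kdelta (\<Sigma> r i) (s r))"

definition replica_avg :: "nat \<Rightarrow> nat \<Rightarrow> real \<Rightarrow> real \<Rightarrow> nat \<Rightarrow> ((nat \<Rightarrow> nat \<Rightarrow> nat) \<Rightarrow> real) \<Rightarrow> real" where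
  "replica_avg q N \<beta> c R F = E_Nc N c (\<lambda>J. \<Sum>\<Sigma>\<in>replicas q N R.
      F \<Sigma> * (\<Prod>r<R. gibbs q N (scaled \<beta> J) (\<Sigma> r)))"

end

theory Submission
  imports Defs
begin

text \<open>
  Both pressures equal \<open>ln q\<close> at \<open>c = 0\<close>, so it suffices to compare their derivatives
  in \<open>c\<close>. For Poisson couplings the derivative of an expectation in the mean is the sum of
  the expected discrete derivatives, and adding one unit to the coupling \<open>J\<^sub>i\<^sub>j\<close> multiplies
  \<open>Z\<close> by \<open>1 - x a\<^sub>i\<^sub>j\<close>, where \<open>x = 1 - exp (- \<beta>)\<close> and \<open>a\<^sub>i\<^sub>j\<close> is the Gibbs probability
  that \<open>\<sigma>\<^sub>i = \<sigma>\<^sub>j\<close>. Hence the derivative of the gap is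
  \<open>ln (1 - x / q) / 2 - E (\<Sum>i j. ln (1 - x a\<^sub>i\<^sub>j)) / (2 N\<^sup>2)\<close>. Expanding both logarithms in
  powers of \<open>x\<close> and writing \<open>a\<^sub>i\<^sub>j\<^sup>R\<close> as an average over \<open>R\<close> independent replicas identifies
  the coefficient of \<open>x\<^sup>R / R\<close> with the replica variance of the empirical measure, which
  is nonnegative. Integrating in \<open>c\<close> gives the identity and the bound.
\<close>

section \<open>Poisson weights\<close>

definition poisson_weight :: "real \<Rightarrow> nat \<Rightarrow> real" where
  "poisson_weight l k = l ^ k / fact k * exp (- l)"

lemma pmf_poisson_dist: "0 \<le> l \<Longrightarrow> pmf (poisson_dist l) k = poisson_weight l k"
  by (auto simp: poisson_dist_def poisson_weight_def indicator_def power_0_left)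

lemma poisson_weight_nonneg: "0 \<le> l \<Longrightarrow> 0 \<le> poisson_weight l k"
  by (simp add: poisson_weight_def)

lemma poisson_weight_Suc: "poisson_weight l (Suc k) = l / real (Suc k) * poisson_weight l k"
  by (simp add: poisson_weight_def field_simps)

lemma poisson_weight_le: "l \<in> {0..L} \<Longrightarrow> poisson_weight l k \<le> L ^ k / fact k"
proof -
  assume l: "l \<in> {0..L}"
  have "l ^ k * exp (- l) \<le> L ^ k * 1"
    using l by (intro mult_mono power_mono) auto
  then show ?thesis by (simp add: poisson_weight_def divide_right_mono)
qed

lemma poisson_weight_sums_1: "poisson_weight l sums 1"
proof -
  have "(\<lambda>k. exp (- l) * (l ^ k /\<^sub>R fact k)) sums (exp (- l) * exp l)"
    by (intro sums_mult exp_converges)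
  moreover have "exp (- l) * (l ^ k /\<^sub>R fact k) = poisson_weight l k" for k
    by (simp add: poisson_weight_def field_simps)
  ultimately show ?thesis by (simp add: exp_minus)
qed

lemma poisson_weight_mean_sums: "(\<lambda>k. poisson_weight l k * real k) sums l"
proof -
  have "(\<lambda>k. l * poisson_weight l k) sums (l * 1)"
    by (intro sums_mult poisson_weight_sums_1)
  then have "(\<lambda>k. poisson_weight l (Suc k) * real (Suc k)) sums l"
    by (simp add: poisson_weight_Suc)
  then show ?thesis
    using sums_Suc_iff[of "\<lambda>k. poisson_weight l k * real k"] by simp
qed

lemma summable_poisson_weight_linear: "summable (\<lambda>k. poisson_weight l k * (1 + real k))"
  using summable_add[OF sums_summable[OF poisson_weight_sums_1]
      sums_summable[OF poisson_weight_mean_sums]]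
  by (simp add: algebra_simps)

lemma summable_poisson_linear_growth:
  assumes "0 \<le> l" and "\<And>k. \<bar>h k\<bar> \<le> K * (1 + real k)"
  shows "summable (\<lambda>k. poisson_weight l k * h k)"
proof (rule summable_comparison_test'[OF summable_mult[OF summable_poisson_weight_linear, of K]])
  fix k
  show "norm (poisson_weight l k * h k) \<le> K * (poisson_weight l k * (1 + real k))"
    using mult_left_mono[OF assms(2)[of k] poisson_weight_nonneg[OF assms(1)]]
    by (simp add: abs_mult abs_of_nonneg[OF poisson_weight_nonneg[OF assms(1)]] mult_ac)
qed

lemma summable_exp_majorant_linear: "summable (\<lambda>k. (1 + real k) * (L ^ k / fact k))"
proof -
  have "poisson_weight L k * (1 + real k) * exp L = (1 + real k) * (L ^ k / fact k)" for k
    by (simp add: poisson_weight_def exp_minus field_simps)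
  then show ?thesis
    using summable_mult2[OF summable_poisson_weight_linear[of L], of "exp L"] by simp
qed

lemma summable_exp_majorant_shifted:
  assumes "0 \<le> L"
  shows "summable (\<lambda>k. (1 + real k) * (if k = 0 then 0 else L ^ (k - 1) / fact (k - 1)))"
proof -
  have "summable (\<lambda>k. (1 + real (Suc k)) * (L ^ k / fact k))"
  proof (rule summable_comparison_test'[OF summable_mult[OF summable_exp_majorant_linear, of 2]])
    fix k :: nat
    have "0 \<le> L ^ k / fact k" using assms by simp
    then show "norm ((1 + real (Suc k)) * (L ^ k / fact k)) \<le> 2 * ((1 + real k) * (L ^ k / fact k))"
      by (simp add: abs_mult mult_right_mono field_simps)
  qed
  then show ?thesis by (subst summable_Suc_iff[symmetric]) simp
qed

definition poisson_weight_deriv :: "real \<Rightarrow> nat \<Rightarrow> real" where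
  "poisson_weight_deriv l k = (if k = 0 then 0 else poisson_weight l (k - 1)) - poisson_weight l k"

lemma poisson_weight_has_derivative:
  "((\<lambda>l. poisson_weight l k) has_field_derivative poisson_weight_deriv l k) (at l within S)"
proof -
  have "((\<lambda>l. poisson_weight l k) has_field_derivative
        real k * l ^ (k - 1) / fact k * exp (- l) - l ^ k / fact k * exp (- l)) (at l within S)"
    unfolding poisson_weight_def by (auto intro!: derivative_eq_intros simp: field_simps)
  moreover have "real k * l ^ (k - 1) / fact k * exp (- l) - l ^ k / fact k * exp (- l)
      = (if k = 0 then 0 else poisson_weight l (k - 1)) - poisson_weight l k"
  proof (cases k)
    case (Suc m)
    have "real (Suc m) * l ^ m / fact (Suc m) = l ^ m / fact m"
      by (simp only: fact_Suc of_nat_mult mult_divide_mult_cancel_left_if) simp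
    then show ?thesis using Suc by (simp add: poisson_weight_def)
  qed (simp add: poisson_weight_def)
  ultimately show ?thesis by (simp add: poisson_weight_deriv_def)
qed

lemma poisson_weight_shift_sums:
  assumes "summable (\<lambda>k. poisson_weight l k * h (Suc k))"
  shows "(\<lambda>k. (if k = 0 then 0 else poisson_weight l (k - 1)) * h k)
           sums (\<Sum>k. poisson_weight l k * h (Suc k))"
  using summable_sums[OF assms]
    sums_Suc_iff[of "\<lambda>k. (if k = 0 then 0 else poisson_weight l (k - 1)) * h k"]
  by simp

lemma uniform_limit_poisson_mixture_deriv:
  fixes H H' :: "real \<Rightarrow> nat \<Rightarrow> real"
  assumes L: "0 \<le> L"
    and bH: "\<And>k x. x \<in> {0..L} \<Longrightarrow> \<bar>H x k\<bar> \<le> K * (1 + real k)"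
    and bH': "\<And>k x. x \<in> {0..L} \<Longrightarrow> \<bar>H' x k\<bar> \<le> K * (1 + real k)"
  defines "f' k x \<equiv> poisson_weight_deriv x k * H x k + poisson_weight x k * H' x k"
  shows "uniform_limit {0..L} (\<lambda>n x. \<Sum>k<n. f' k x) (\<lambda>x. \<Sum>k. f' k x) sequentially"
proof (rule Weierstrass_m_test)
  define e where "e k = L ^ k / fact k" for k
  define e' where "e' k = (if k = 0 then 0 else e (k - 1))" for k
  show "summable (\<lambda>k. K * (2 * ((1 + real k) * e k) + (1 + real k) * e' k))"
    unfolding e_def e'_def
    by (intro summable_mult summable_add summable_exp_majorant_linear summable_exp_majorant_shifted L)
  fix k x assume x: "x \<in> {0..L}"
  have pw: "0 \<le> poisson_weight x j" "poisson_weight x j \<le> e j" for j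
    using x poisson_weight_le[OF x] by (auto simp: e_def poisson_weight_nonneg)
  have w: "\<bar>poisson_weight x k\<bar> \<le> e k" "\<bar>poisson_weight_deriv x k\<bar> \<le> e k + e' k"
    using pw[of k] pw[of "k - 1"] by (auto simp: e'_def poisson_weight_deriv_def abs_le_iff)
  have "\<bar>f' k x\<bar> \<le> \<bar>poisson_weight_deriv x k\<bar> * \<bar>H x k\<bar> + \<bar>poisson_weight x k\<bar> * \<bar>H' x k\<bar>"
    unfolding f'_def by (metis abs_mult abs_triangle_ineq)
  also have "\<dots> \<le> (e k + e' k) * (K * (1 + real k)) + e k * (K * (1 + real k))"
    by (intro add_mono mult_mono w bH bH' x) (use L in \<open>auto simp: e_def e'_def\<close>)
  finally show "norm (f' k x) \<le> K * (2 * ((1 + real k) * e k) + (1 + real k) * e' k)"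
    by (simp add: algebra_simps)
qed

text \<open>The derivative of the weights is absorbed by a shift of the summation index.\<close>

lemma poisson_mixture_has_derivative:
  fixes H H' :: "real \<Rightarrow> nat \<Rightarrow> real"
  assumes L: "0 \<le> L" and l: "l \<in> {0..L}"
    and dH: "\<And>k x. x \<in> {0..L} \<Longrightarrow> ((\<lambda>x. H x k) has_field_derivative H' x k) (at x within {0..L})"
    and bH: "\<And>k x. x \<in> {0..L} \<Longrightarrow> \<bar>H x k\<bar> \<le> K * (1 + real k)"
    and bH': "\<And>k x. x \<in> {0..L} \<Longrightarrow> \<bar>H' x k\<bar> \<le> K * (1 + real k)"
  shows "((\<lambda>x. \<Sum>k. poisson_weight x k * H x k) has_field_derivative
           (\<Sum>k. poisson_weight l k * (H l (Suc k) - H l k + H' l k))) (at l within {0..L})"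
proof -
  define f where "f k x = poisson_weight x k * H x k" for k x
  define f' where "f' k x = poisson_weight_deriv x k * H x k + poisson_weight x k * H' x k" for k x
  have df: "(f k has_field_derivative f' k x) (at x within {0..L})" if "x \<in> {0..L}" for k x
    unfolding f_def f'_def
    by (rule derivative_eq_intros poisson_weight_has_derivative dH that | simp)+
  have K: "0 \<le> K" and l0: "0 \<le> l" using bH[OF l, of 0] l by auto
  have sf: "summable (\<lambda>k. f k l)"
    unfolding f_def by (rule summable_poisson_linear_growth[OF l0 bH[OF l]])
  obtain g where g: "\<forall>x\<in>{0..L}. (\<lambda>k. f k x) sums g x \<and> (g has_field_derivative (\<Sum>k. f' k x)) (at x within {0..L})"
    using has_field_derivative_series[OF convex_real_interval(5) df
        uniform_limit_poisson_mixture_deriv[where H = H and H' = H', OF L bH bH', folded f'_def] l sf] by blast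
  have d: "((\<lambda>x. \<Sum>k. f k x) has_field_derivative (\<Sum>k. f' k l)) (at l within {0..L})"
    by (rule has_field_derivative_transform_within[OF conjunct2[OF g[rule_format, OF l]], of 1])
       (use l g in \<open>auto simp: sums_iff\<close>)
  have "\<bar>H l (Suc k)\<bar> \<le> 2 * K * (1 + real k)" for k
  proof -
    have "K * (1 + real (Suc k)) \<le> 2 * K * (1 + real k)"
      using K by (simp add: algebra_simps mult_left_mono)
    then show ?thesis using bH[OF l, of "Suc k"] by linarith
  qed
  then have sA: "summable (\<lambda>k. poisson_weight l k * H l (Suc k))"
    by (rule summable_poisson_linear_growth[OF l0])
  have "\<bar>H' l k - H l k\<bar> \<le> 2 * K * (1 + real k)" for k
    using bH[OF l, of k] bH'[OF l, of k] by linarith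
  then have sB: "summable (\<lambda>k. poisson_weight l k * (H' l k - H l k))"
    by (rule summable_poisson_linear_growth[OF l0])
  have "(\<lambda>k. f' k l) sums ((\<Sum>k. poisson_weight l k * H l (Suc k)) + (\<Sum>k. poisson_weight l k * (H' l k - H l k)))"
    using sums_add[OF poisson_weight_shift_sums[OF sA] summable_sums[OF sB]]
    by (simp add: f'_def poisson_weight_deriv_def algebra_simps)
  also have "(\<Sum>k. poisson_weight l k * H l (Suc k)) + (\<Sum>k. poisson_weight l k * (H' l k - H l k))
      = (\<Sum>k. poisson_weight l k * (H l (Suc k) - H l k + H' l k))"
    by (subst suminf_add[OF sA sB]) (simp add: algebra_simps)
  finally show ?thesis using d by (simp add: f_def sums_iff)
qed

section \<open>Expectations over countable laws\<close>

lemma expectation_nat_pmf_sums: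
  fixes p :: "nat pmf" and f :: "nat \<Rightarrow> real"
  assumes "integrable p f"
  shows "(\<lambda>k. pmf p k * f k) sums measure_pmf.expectation p f"
proof -
  have "integrable (count_space UNIV) (\<lambda>k. pmf p k * f k)"
    using assms unfolding measure_pmf_eq_density by (subst (asm) integrable_density) auto
  moreover have "measure_pmf.expectation p f = integral\<^sup>L (count_space UNIV) (\<lambda>k. pmf p k * f k)"
    unfolding measure_pmf_eq_density by (subst integral_density) auto
  ultimately show ?thesis using sums_integral_count_space_nat by simp
qed

lemma integrable_nat_pmf:
  fixes p :: "nat pmf" and f :: "nat \<Rightarrow> real"
  assumes "summable (\<lambda>k. pmf p k * \<bar>f k\<bar>)"
  shows "integrable p f"
proof -
  have "integrable (count_space UNIV) (\<lambda>k. pmf p k * f k)"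
    unfolding integrable_count_space_nat_iff using assms by (simp add: abs_mult)
  then show ?thesis unfolding measure_pmf_eq_density by (subst integrable_density) auto
qed

lemma expectation_bind_pmf_nonneg:
  fixes g :: "'b \<Rightarrow> real"
  assumes int: "integrable (bind_pmf M N) g" and nn: "\<And>y. 0 \<le> g y"
  shows "AE x in M. integrable (N x) g"
    and "integrable M (\<lambda>x. measure_pmf.expectation (N x) g)"
    and "measure_pmf.expectation (bind_pmf M N) g = measure_pmf.expectation M (\<lambda>x. measure_pmf.expectation (N x) g)"
proof -
  define G where "G x = (\<integral>\<^sup>+y. ennreal (g y) \<partial>N x)" for x
  have total: "(\<integral>\<^sup>+x. G x \<partial>M) = ennreal (measure_pmf.expectation (bind_pmf M N) g)"
    using int nn by (simp add: G_def nn_integral_eq_integral[symmetric])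
  then have "AE x in M. G x \<noteq> \<infinity>"
    by (intro nn_integral_noteq_infinite) auto
  then have ae: "AE x in M. integrable (N x) g \<and> ennreal (measure_pmf.expectation (N x) g) = G x"
  proof (rule AE_mp, intro AE_I2 impI)
    fix x assume "G x \<noteq> \<infinity>"
    then obtain r where r: "G x = ennreal r" "0 \<le> r" by (cases "G x") auto
    then have "integrable (N x) g \<and> measure_pmf.expectation (N x) g = r"
      using nn by (subst nn_integral_eq_integrable[symmetric]) (auto simp: G_def)
    then show "integrable (N x) g \<and> ennreal (measure_pmf.expectation (N x) g) = G x"
      using r by simp
  qed
  then show "AE x in M. integrable (N x) g" by auto
  have "(\<integral>\<^sup>+x. ennreal (measure_pmf.expectation (N x) g) \<partial>M) = ennreal (measure_pmf.expectation (bind_pmf M N) g)"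
    using ae total by (subst nn_integral_cong_AE[where v=G]) auto
  then have "integrable M (\<lambda>x. measure_pmf.expectation (N x) g) \<and>
     measure_pmf.expectation M (\<lambda>x. measure_pmf.expectation (N x) g) = measure_pmf.expectation (bind_pmf M N) g"
    using nn by (subst nn_integral_eq_integrable[symmetric]) (auto intro!: integral_nonneg_AE)
  then show "integrable M (\<lambda>x. measure_pmf.expectation (N x) g)"
    and "measure_pmf.expectation (bind_pmf M N) g = measure_pmf.expectation M (\<lambda>x. measure_pmf.expectation (N x) g)"
    by auto
qed

lemma expectation_bind_pmf:
  fixes f :: "'b \<Rightarrow> real"
  assumes int: "integrable (bind_pmf M N) f"
  shows "integrable M (\<lambda>x. measure_pmf.expectation (N x) f)"
    and "measure_pmf.expectation (bind_pmf M N) f = measure_pmf.expectation M (\<lambda>x. measure_pmf.expectation (N x) f)"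
proof -
  define fp where "fp y = max (f y) 0" for y
  define fm where "fm y = max (- f y) 0" for y
  have f_eq: "f = (\<lambda>y. fp y - fm y)" by (auto simp: fp_def fm_def fun_eq_iff)
  have ip: "integrable (bind_pmf M N) fp" and im: "integrable (bind_pmf M N) fm"
    unfolding fp_def fm_def using int by auto
  have nn: "\<And>y. 0 \<le> fp y" "\<And>y. 0 \<le> fm y" by (simp_all add: fp_def fm_def)
  note Pp = expectation_bind_pmf_nonneg[OF ip nn(1)]
  note Pm = expectation_bind_pmf_nonneg[OF im nn(2)]
  have ae: "AE x in M. measure_pmf.expectation (N x) f
      = measure_pmf.expectation (N x) fp - measure_pmf.expectation (N x) fm"
    using Pp(1) Pm(1) by eventually_elim (simp add: f_eq)
  show "integrable M (\<lambda>x. measure_pmf.expectation (N x) f)"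
    using integrable_cong_AE[OF _ _ ae] Pp(2) Pm(2) by simp
  have "measure_pmf.expectation M (\<lambda>x. measure_pmf.expectation (N x) f)
      = measure_pmf.expectation M (\<lambda>x. measure_pmf.expectation (N x) fp - measure_pmf.expectation (N x) fm)"
    using ae by (intro integral_cong_AE) auto
  also have "\<dots> = measure_pmf.expectation (bind_pmf M N) f"
    using Pp Pm ip im by (simp add: f_eq integral_diff)
  finally show "measure_pmf.expectation (bind_pmf M N) f = measure_pmf.expectation M (\<lambda>x. measure_pmf.expectation (N x) f)" ..
qed

section \<open>Poisson random fields\<close>

definition poisson_field :: "'a set \<Rightarrow> real \<Rightarrow> ('a \<Rightarrow> nat) pmf" where
  "poisson_field A l = Pi_pmf A 0 (\<lambda>_. poisson_dist l)"

definition poisson_expectation :: "'a set \<Rightarrow> real \<Rightarrow> (('a \<Rightarrow> nat) \<Rightarrow> real) \<Rightarrow> real" where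
  "poisson_expectation A l F = measure_pmf.expectation (poisson_field A l) F"

definition linear_growth :: "'a set \<Rightarrow> real \<Rightarrow> (('a \<Rightarrow> nat) \<Rightarrow> real) \<Rightarrow> bool" where
  "linear_growth A K F \<longleftrightarrow> (\<forall>J. \<bar>F J\<bar> \<le> K * (1 + (\<Sum>a\<in>A. real (J a))))"

definition increment :: "'a \<Rightarrow> (('a \<Rightarrow> nat) \<Rightarrow> real) \<Rightarrow> ('a \<Rightarrow> nat) \<Rightarrow> real" where
  "increment b F J = F (J(b := Suc (J b))) - F J"

lemma integrable_poisson_dist_real: "0 \<le> l \<Longrightarrow> integrable (poisson_dist l) real"
  by (rule integrable_nat_pmf)
     (use sums_summable[OF poisson_weight_mean_sums] in \<open>simp add: pmf_poisson_dist\<close>)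

lemma expectation_poisson_dist_real: "0 \<le> l \<Longrightarrow> measure_pmf.expectation (poisson_dist l) real = l"
  using expectation_nat_pmf_sums[OF integrable_poisson_dist_real, of l] poisson_weight_mean_sums[of l]
  by (simp add: pmf_poisson_dist sums_unique2)

lemma poisson_expectation_component:
  assumes "finite A" "a \<in> A" "0 \<le> l"
  shows "integrable (poisson_field A l) (\<lambda>J. real (J a))"
    and "poisson_expectation A l (\<lambda>J. real (J a)) = l"
proof -
  have m: "map_pmf (\<lambda>J. J a) (poisson_field A l) = poisson_dist l"
    using assms by (simp add: poisson_field_def Pi_pmf_component)
  show "integrable (poisson_field A l) (\<lambda>J. real (J a))"
    using integrable_poisson_dist_real[OF assms(3)] by (simp flip: m)
  show "poisson_expectation A l (\<lambda>J. real (J a)) = l"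
    using expectation_poisson_dist_real[OF assms(3)] by (simp add: poisson_expectation_def flip: m)
qed

lemma poisson_expectation_total:
  assumes "finite A" "0 \<le> l"
  shows "integrable (poisson_field A l) (\<lambda>J. \<Sum>a\<in>A. real (J a))"
    and "poisson_expectation A l (\<lambda>J. \<Sum>a\<in>A. real (J a)) = real (card A) * l"
proof -
  note component = poisson_expectation_component[OF assms(1) _ assms(2)]
  show "integrable (poisson_field A l) (\<lambda>J. \<Sum>a\<in>A. real (J a))"
    using component by (intro Bochner_Integration.integrable_sum) auto
  then show "poisson_expectation A l (\<lambda>J. \<Sum>a\<in>A. real (J a)) = real (card A) * l"
    using component unfolding poisson_expectation_def
    by (subst Bochner_Integration.integral_sum) auto
qed

lemma linear_growth_nonneg: "linear_growth A K F \<Longrightarrow> 0 \<le> K"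
  unfolding linear_growth_def by (drule spec[of _ "\<lambda>_. 0"]) simp

lemma linear_growth_of_bounded:
  assumes "\<And>J. \<bar>F J\<bar> \<le> B"
  shows "linear_growth A B F"
  unfolding linear_growth_def
proof
  fix J
  have "B * 1 \<le> B * (1 + (\<Sum>a\<in>A. real (J a)))"
    using assms[of J] by (intro mult_left_mono) (auto simp: sum_nonneg)
  then show "\<bar>F J\<bar> \<le> B * (1 + (\<Sum>a\<in>A. real (J a)))" using assms[of J] by simp
qed

lemma integrable_linear_growth:
  assumes "finite A" "0 \<le> l" "linear_growth A K F"
  shows "integrable (poisson_field A l) F"
proof (rule Bochner_Integration.integrable_bound)
  show "integrable (poisson_field A l) (\<lambda>J. K * (1 + (\<Sum>a\<in>A. real (J a))))"
    using poisson_expectation_total[OF assms(1,2)] by auto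
  show "AE J in poisson_field A l. norm (F J) \<le> norm (K * (1 + (\<Sum>a\<in>A. real (J a))))"
    using assms(3) by (intro AE_I2) (auto simp: linear_growth_def intro: order.trans[OF _ abs_ge_self])
qed simp

lemma poisson_expectation_abs_le:
  assumes "finite A" "l \<in> {0..L}" "linear_growth A K F"
  shows "\<bar>poisson_expectation A l F\<bar> \<le> K * (1 + real (card A) * L)"
proof -
  have l: "0 \<le> l" using assms(2) by simp
  have "\<bar>poisson_expectation A l F\<bar> \<le> measure_pmf.expectation (poisson_field A l) (\<lambda>J. norm (F J))"
    unfolding poisson_expectation_def using integral_norm_bound[of "poisson_field A l" F] by simp
  also have "\<dots> \<le> measure_pmf.expectation (poisson_field A l) (\<lambda>J. K * (1 + (\<Sum>a\<in>A. real (J a))))"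
    using assms integrable_linear_growth[OF assms(1) l assms(3)] poisson_expectation_total[OF assms(1) l]
    by (intro integral_mono) (auto simp: linear_growth_def)
  also have "\<dots> = K * (1 + real (card A) * l)"
    using poisson_expectation_total[OF assms(1) l] by (simp add: poisson_expectation_def)
  also have "\<dots> \<le> K * (1 + real (card A) * L)"
    using assms linear_growth_nonneg[OF assms(3)] by (intro mult_left_mono) (auto intro: mult_left_mono)
  finally show ?thesis .
qed

lemma poisson_expectation_diff:
  assumes "finite A" "0 \<le> l" "linear_growth A K1 F1" "linear_growth A K2 F2"
  shows "poisson_expectation A l (\<lambda>J. F1 J - F2 J) = poisson_expectation A l F1 - poisson_expectation A l F2"
  unfolding poisson_expectation_def
  using integrable_linear_growth[OF assms(1,2,3)] integrable_linear_growth[OF assms(1,2,4)]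
  by (rule Bochner_Integration.integral_diff)

lemma poisson_expectation_insert_sums:
  assumes "finite A" "a \<notin> A" "0 \<le> l" "integrable (poisson_field (insert a A) l) F"
  shows "(\<lambda>y. poisson_weight l y * poisson_expectation A l (\<lambda>J. F (J(a := y))))
           sums poisson_expectation (insert a A) l F"
proof -
  have split: "poisson_field (insert a A) l
      = poisson_dist l \<bind> (\<lambda>y. map_pmf (\<lambda>J. J(a := y)) (poisson_field A l))"
    using assms(1,2) unfolding poisson_field_def by (simp add: Pi_pmf_insert' map_pmf_def)
  note int = assms(4)[unfolded split]
  have "(\<lambda>y. pmf (poisson_dist l) y * measure_pmf.expectation (map_pmf (\<lambda>J. J(a := y)) (poisson_field A l)) F)
     sums measure_pmf.expectation (poisson_dist l) (\<lambda>y. measure_pmf.expectation (map_pmf (\<lambda>J. J(a := y)) (poisson_field A l)) F)"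
    by (rule expectation_nat_pmf_sums[OF expectation_bind_pmf(1)[OF int]])
  then show ?thesis
    using expectation_bind_pmf(2)[OF int] assms(3)
    by (simp add: split pmf_poisson_dist poisson_expectation_def)
qed

lemma sum_fun_upd_nat:
  assumes "finite A" "b \<in> A"
  shows "(\<Sum>a\<in>A. real ((J(b := v)) a)) = (\<Sum>a\<in>A. real (J a)) - real (J b) + real v"
proof -
  have "(\<Sum>a\<in>A - {b}. real ((J(b := v)) a)) = (\<Sum>a\<in>A - {b}. real (J a))"
    by (rule sum.cong) auto
  then show ?thesis using assms by (simp add: sum.remove[of A b])
qed

lemma linear_growth_fun_upd:
  assumes "finite A" "a \<notin> A" "linear_growth (insert a A) K F"
  shows "linear_growth A (K * (1 + real y)) (\<lambda>J. F (J(a := y)))"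
  unfolding linear_growth_def
proof
  fix J :: "'a \<Rightarrow> nat"
  let ?S = "\<Sum>b\<in>A. real (J b)"
  have S: "0 \<le> ?S" by (simp add: sum_nonneg)
  have "(\<Sum>b\<in>A. real ((J(a := y)) b)) = ?S"
    using assms(2) by (intro sum.cong) auto
  then have "(\<Sum>b\<in>insert a A. real ((J(a := y)) b)) = real y + ?S"
    using assms(1,2) by simp
  then have "\<bar>F (J(a := y))\<bar> \<le> K * (1 + (real y + ?S))"
    using assms(3) unfolding linear_growth_def by (metis (no_types))
  also have "\<dots> \<le> K * ((1 + real y) * (1 + ?S))"
    using S linear_growth_nonneg[OF assms(3)] by (intro mult_left_mono) (auto simp: algebra_simps)
  finally show "\<bar>F (J(a := y))\<bar> \<le> K * (1 + real y) * (1 + ?S)" by (simp add: mult.assoc)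
qed

lemma linear_growth_increment:
  assumes "finite A" "b \<in> A" "linear_growth A K F"
  shows "linear_growth A (3 * K) (increment b F)"
  unfolding linear_growth_def
proof
  fix J
  let ?S = "\<Sum>a\<in>A. real (J a)"
  have K: "0 \<le> K" and S: "0 \<le> ?S"
    using linear_growth_nonneg[OF assms(3)] by (auto simp: sum_nonneg)
  have "(\<Sum>a\<in>A. real ((J(b := Suc (J b))) a)) = ?S + 1"
    using sum_fun_upd_nat[OF assms(1,2)] by simp
  then have "\<bar>F (J(b := Suc (J b)))\<bar> \<le> K * (1 + (?S + 1))"
    using assms(3) unfolding linear_growth_def by (metis (no_types))
  moreover have "\<bar>F J\<bar> \<le> K * (1 + ?S)" using assms(3) unfolding linear_growth_def by blast
  moreover have "K * (1 + (?S + 1)) + K * (1 + ?S) \<le> 3 * K * (1 + ?S)"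
    using K S by (simp add: algebra_simps mult_left_mono)
  ultimately show "\<bar>increment b F J\<bar> \<le> 3 * K * (1 + ?S)"
    unfolding increment_def by linarith
qed

lemma increment_fun_upd:
  "b \<noteq> a \<Longrightarrow> increment b F (J(a := y)) = increment b (\<lambda>J. F (J(a := y))) J"
  "increment a F (J(a := y)) = F (J(a := Suc y)) - F (J(a := y))"
  unfolding increment_def by (simp_all add: fun_upd_twist)

lemma sum_increment_insert_sums:
  assumes fin: "finite A" and a: "a \<notin> A" and l: "0 \<le> l" and growth: "linear_growth (insert a A) K F"
  defines "H y \<equiv> poisson_expectation A l (\<lambda>J. F (J(a := y)))"
    and "H' y \<equiv> (\<Sum>b\<in>A. poisson_expectation A l (increment b (\<lambda>J. F (J(a := y)))))"
  shows "(\<lambda>y. poisson_weight l y * (H (Suc y) - H y + H' y))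
           sums (\<Sum>b\<in>insert a A. poisson_expectation (insert a A) l (increment b F))"
proof -
  have "(\<lambda>y. \<Sum>b\<in>insert a A. poisson_weight l y * poisson_expectation A l (\<lambda>J. increment b F (J(a := y))))
      sums (\<Sum>b\<in>insert a A. poisson_expectation (insert a A) l (increment b F))"
    by (intro sums_sum poisson_expectation_insert_sums[OF fin a l]
        integrable_linear_growth[OF _ l linear_growth_increment[OF _ _ growth]])
       (use fin in auto)
  moreover have "poisson_expectation A l (\<lambda>J. increment a F (J(a := y))) = H (Suc y) - H y" for y
    using poisson_expectation_diff[OF fin l linear_growth_fun_upd[OF fin a growth]
        linear_growth_fun_upd[OF fin a growth]]
    by (simp add: increment_fun_upd H_def)
  moreover have "poisson_expectation A l (\<lambda>J. increment b F (J(a := y)))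
      = poisson_expectation A l (increment b (\<lambda>J. F (J(a := y))))" if "b \<in> A" for b y
    using that a by (intro arg_cong[where f = "poisson_expectation A l"] ext increment_fun_upd(1)) auto
  ultimately show ?thesis
    using fin a by (simp add: H'_def sum_distrib_left algebra_simps)
qed

text \<open>A Poisson analogue of the Russo--Margulis formula.\<close>

theorem poisson_expectation_has_derivative:
  assumes "finite A" "linear_growth A K F" "0 \<le> L" "l \<in> {0..L}"
  shows "((\<lambda>x. poisson_expectation A x F) has_field_derivative
           (\<Sum>b\<in>A. poisson_expectation A l (increment b F))) (at l within {0..L})"
  using assms(1,2,4)
proof (induction A arbitrary: F K l rule: finite_induct)
  case empty
  then show ?case by (simp add: poisson_expectation_def poisson_field_def)
next
  case (insert a A)
  note L = \<open>0 \<le> L\<close> and growth = insert.prems(1) and l = insert.prems(2)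
  have K: "0 \<le> K" using linear_growth_nonneg[OF growth] .
  define n where "n = real (card A)"
  define G where "G y = (\<lambda>J. F (J(a := y)))" for y
  define H where "H x y = poisson_expectation A x (G y)" for x y
  define H' where "H' x y = (\<Sum>b\<in>A. poisson_expectation A x (increment b (G y)))" for x y
  define K' where "K' = 3 * K * (1 + n * L) * (1 + n)"
  have growth_G: "linear_growth A (K * (1 + real y)) (G y)" for y
    unfolding G_def by (rule linear_growth_fun_upd[OF insert.hyps(1,2) growth])
  have growth_inc_G: "linear_growth A (3 * (K * (1 + real y))) (increment b (G y))" if "b \<in> A" for y b
    by (rule linear_growth_increment[OF insert.hyps(1) that growth_G])
  have dH: "((\<lambda>x. H x y) has_field_derivative H' x y) (at x within {0..L})" if "x \<in> {0..L}" for x y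
    unfolding H_def H'_def by (rule insert.IH[OF growth_G that])
  have bH: "\<bar>H x y\<bar> \<le> K' * (1 + real y)" if "x \<in> {0..L}" for x y
  proof -
    have "\<bar>H x y\<bar> \<le> K * (1 + real y) * (1 + n * L)"
      unfolding H_def n_def by (rule poisson_expectation_abs_le[OF insert.hyps(1) that growth_G])
    also have "\<dots> \<le> K' * (1 + real y)"
      unfolding K'_def using K L by (simp add: n_def algebra_simps mult_left_mono mult_nonneg_nonneg)
    finally show ?thesis .
  qed
  have bH': "\<bar>H' x y\<bar> \<le> K' * (1 + real y)" if "x \<in> {0..L}" for x y
  proof -
    have "\<bar>H' x y\<bar> \<le> (\<Sum>b\<in>A. 3 * (K * (1 + real y)) * (1 + n * L))"
      unfolding H'_def n_def
      by (intro order.trans[OF sum_abs] sum_mono poisson_expectation_abs_le[OF insert.hyps(1) that growth_inc_G])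
    also have "\<dots> \<le> K' * (1 + real y)"
      unfolding K'_def using K L by (simp add: n_def algebra_simps mult_left_mono mult_nonneg_nonneg)
    finally show ?thesis .
  qed
  have mixture: "poisson_expectation (insert a A) x F = (\<Sum>y. poisson_weight x y * H x y)"
    if "x \<in> {0..L}" for x
  proof -
    have "(\<lambda>y. poisson_weight x y * H x y) sums poisson_expectation (insert a A) x F"
      unfolding H_def G_def using that insert.hyps(1)
      by (intro poisson_expectation_insert_sums[OF insert.hyps(1,2)] integrable_linear_growth[OF _ _ growth]) auto
    then show ?thesis by (simp add: sums_iff)
  qed
  have "((\<lambda>x. poisson_expectation (insert a A) x F) has_field_derivative
         (\<Sum>y. poisson_weight l y * (H l (Suc y) - H l y + H' l y))) (at l within {0..L})"
    using poisson_mixture_has_derivative[OF L l dH bH bH']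
    by (rule has_field_derivative_transform_within[OF _ zero_less_one l]) (use mixture in auto)
  moreover have "(\<lambda>y. poisson_weight l y * (H l (Suc y) - H l y + H' l y))
      sums (\<Sum>b\<in>insert a A. poisson_expectation (insert a A) l (increment b F))"
    unfolding H_def H'_def G_def using l by (intro sum_increment_insert_sums[OF insert.hyps(1,2) _ growth]) auto
  ultimately show ?case by (simp add: sums_iff)
qed

section \<open>Gibbs measures of the Potts model\<close>

lemma finite_configs: "finite (configs q N)"
  unfolding configs_def by (intro finite_PiE) auto

lemma card_configs: "card (configs q N) = q ^ N"
  unfolding configs_def by (simp add: card_PiE)

lemma partition_fn_pos: "1 \<le> q \<Longrightarrow> 0 < partition_fn q N M"
  unfolding partition_fn_def using card_configs[of q N] finite_configs
  by (intro sum_pos) (auto simp: card_eq_0_iff[symmetric])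

lemma gibbs_nonneg: "1 \<le> q \<Longrightarrow> 0 \<le> gibbs q N M \<sigma>"
  unfolding gibbs_def using partition_fn_pos[of q N M] by simp

lemma sum_gibbs: "1 \<le> q \<Longrightarrow> (\<Sum>\<sigma>\<in>configs q N. gibbs q N M \<sigma>) = 1"
  unfolding gibbs_def using partition_fn_pos[of q N M]
  by (simp add: sum_divide_distrib[symmetric] partition_fn_def)

lemma kdelta_bounds: "0 \<le> kdelta a b" "kdelta a b \<le> 1"
  by (auto simp: kdelta_def)

definition coincidence :: "nat \<Rightarrow> nat \<Rightarrow> (nat \<times> nat \<Rightarrow> real) \<Rightarrow> nat \<times> nat \<Rightarrow> real" where
  "coincidence q N M p = (\<Sum>\<sigma>\<in>configs q N. gibbs q N M \<sigma> * kdelta (\<sigma> (fst p)) (\<sigma> (snd p)))"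

lemma coincidence_bounds:
  assumes "1 \<le> q"
  shows "0 \<le> coincidence q N M p" "coincidence q N M p \<le> 1"
proof -
  show "0 \<le> coincidence q N M p" unfolding coincidence_def
    using gibbs_nonneg[OF assms] kdelta_bounds by (intro sum_nonneg mult_nonneg_nonneg) auto
  have "coincidence q N M p \<le> (\<Sum>\<sigma>\<in>configs q N. gibbs q N M \<sigma>)" unfolding coincidence_def
    using gibbs_nonneg[OF assms] kdelta_bounds by (intro sum_mono) (simp add: mult_left_le)
  then show "coincidence q N M p \<le> 1" using sum_gibbs[OF assms] by simp
qed

lemma hamiltonian_eq_sum_edges:
  "hamiltonian N \<sigma> M = (\<Sum>p\<in>{..<N}\<times>{..<N}. M p * kdelta (\<sigma> (fst p)) (\<sigma> (snd p)))"
  unfolding hamiltonian_def by (simp add: sum.cartesian_product case_prod_beta)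

lemma hamiltonian_fun_upd:
  assumes "p \<in> {..<N}\<times>{..<N}"
  shows "hamiltonian N \<sigma> (M(p := v)) = hamiltonian N \<sigma> M + (v - M p) * kdelta (\<sigma> (fst p)) (\<sigma> (snd p))"
proof -
  let ?d = "\<lambda>p. kdelta (\<sigma> (fst p)) (\<sigma> (snd p))"
  have "(\<Sum>p'\<in>{..<N}\<times>{..<N} - {p}. (M(p := v)) p' * ?d p') = (\<Sum>p'\<in>{..<N}\<times>{..<N} - {p}. M p' * ?d p')"
    by (rule sum.cong) auto
  then show ?thesis
    using assms by (simp add: hamiltonian_eq_sum_edges sum.remove[of _ p] algebra_simps)
qed

text \<open>The key identity is \<open>exp (- \<beta> * kdelta a b) = 1 - (1 - exp (- \<beta>)) * kdelta a b\<close>.\<close>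

lemma partition_fn_fun_upd:
  assumes q: "1 \<le> q" and p: "p \<in> {..<N}\<times>{..<N}"
  shows "partition_fn q N (M(p := M p + \<beta>)) =
     partition_fn q N M * (1 - (1 - exp (- \<beta>)) * coincidence q N M p)"
proof -
  let ?x = "1 - exp (- \<beta>)"
  let ?d = "\<lambda>\<sigma>::nat\<Rightarrow>nat. kdelta (\<sigma> (fst p)) (\<sigma> (snd p))"
  have "exp (- hamiltonian N \<sigma> (M(p := M p + \<beta>))) = exp (- hamiltonian N \<sigma> M) * (1 - ?x * ?d \<sigma>)" for \<sigma>
    unfolding hamiltonian_fun_upd[OF p] by (simp add: kdelta_def exp_add[symmetric])
  then have "partition_fn q N (M(p := M p + \<beta>))
      = (\<Sum>\<sigma>\<in>configs q N. exp (- hamiltonian N \<sigma> M) * (1 - ?x * ?d \<sigma>))"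
    unfolding partition_fn_def by (intro sum.cong) auto
  also have "\<dots> = partition_fn q N M - ?x * (\<Sum>\<sigma>\<in>configs q N. exp (- hamiltonian N \<sigma> M) * ?d \<sigma>)"
    unfolding partition_fn_def by (simp add: right_diff_distrib sum_subtractf sum_distrib_left mult_ac)
  also have "(\<Sum>\<sigma>\<in>configs q N. exp (- hamiltonian N \<sigma> M) * ?d \<sigma>) = partition_fn q N M * coincidence q N M p"
    unfolding coincidence_def gibbs_def using partition_fn_pos[OF q, of N M]
    by (simp add: sum_distrib_left)
  finally show ?thesis by (simp only: right_diff_distrib mult_1_right mult.left_commute)
qed

lemma scaled_fun_upd: "scaled \<beta> (J(p := Suc (J p))) = (scaled \<beta> J)(p := scaled \<beta> J p + \<beta>)"
  by (simp add: scaled_def fun_eq_iff algebra_simps)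

lemma log_factor_bounds:
  fixes \<beta> a :: real
  assumes "0 \<le> \<beta>" "0 \<le> a" "a \<le> 1"
  shows "0 < 1 - (1 - exp (- \<beta>)) * a" "- \<beta> \<le> ln (1 - (1 - exp (- \<beta>)) * a)"
    "ln (1 - (1 - exp (- \<beta>)) * a) \<le> 0"
proof -
  have x: "0 \<le> 1 - exp (- \<beta>)" using assms(1) by auto
  have lo: "exp (- \<beta>) \<le> 1 - (1 - exp (- \<beta>)) * a"
    using mult_left_le[OF assms(3) x] by simp
  then show pos: "0 < 1 - (1 - exp (- \<beta>)) * a" by (meson exp_gt_zero less_le_trans)
  show "- \<beta> \<le> ln (1 - (1 - exp (- \<beta>)) * a)"
    using ln_le_cancel_iff[OF exp_gt_zero pos, of "- \<beta>"] lo by simp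
  show "ln (1 - (1 - exp (- \<beta>)) * a) \<le> 0"
    using pos x assms(2) by simp
qed

lemma ln_partition_fn_increment:
  assumes "1 \<le> q" "p \<in> {..<N}\<times>{..<N}" "0 \<le> \<beta>"
  shows "ln (partition_fn q N (scaled \<beta> (J(p := Suc (J p))))) - ln (partition_fn q N (scaled \<beta> J)) =
     ln (1 - (1 - exp (- \<beta>)) * coincidence q N (scaled \<beta> J) p)"
proof -
  have "0 < 1 - (1 - exp (- \<beta>)) * coincidence q N (scaled \<beta> J) p"
    using log_factor_bounds(1)[OF assms(3) coincidence_bounds[OF assms(1)]] .
  then show ?thesis
    using partition_fn_pos[OF assms(1), of N "scaled \<beta> J"]
    by (simp add: scaled_fun_upd partition_fn_fun_upd[OF assms(1,2)] ln_mult)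
qed

section \<open>Replicas\<close>

definition replica_fluctuation :: "nat \<Rightarrow> nat \<Rightarrow> nat \<Rightarrow> (nat \<Rightarrow> nat) \<Rightarrow> (nat \<times> nat \<Rightarrow> real) \<Rightarrow> real" where
  "replica_fluctuation q N R s M = (\<Sum>\<Sigma>\<in>replicas q N R.
      (emp_measure N R \<Sigma> s - 1 / real q ^ R)^2 * (\<Prod>r<R. gibbs q N M (\<Sigma> r)))"

definition overlap_moment :: "nat \<Rightarrow> nat \<Rightarrow> (nat \<times> nat \<Rightarrow> real) \<Rightarrow> nat \<Rightarrow> real" where
  "overlap_moment q N M R =
     1 / real N ^ 2 * (\<Sum>p\<in>{..<N}\<times>{..<N}. coincidence q N M p ^ R) - 1 / real q ^ R"

lemma replica_avg_eq_replica_fluctuation: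
  "replica_avg q N \<beta> c R (\<lambda>\<Sigma>. (emp_measure N R \<Sigma> s - 1 / real q ^ R)^2)
     = E_Nc N c (\<lambda>J. replica_fluctuation q N R s (scaled \<beta> J))"
  unfolding replica_avg_def replica_fluctuation_def ..

lemma sum_replica_weights: "1 \<le> q \<Longrightarrow> (\<Sum>\<Sigma>\<in>replicas q N R. \<Prod>r<R. gibbs q N M (\<Sigma> r)) = 1"
  unfolding replicas_def
  by (subst prod_sum_PiE[symmetric]) (auto simp: finite_configs sum_gibbs)

lemma replica_spin: "\<Sigma> \<in> replicas q N R \<Longrightarrow> r < R \<Longrightarrow> i < N \<Longrightarrow> \<Sigma> r i \<in> {1..q}"
  unfolding replicas_def configs_def by (auto simp: PiE_iff)

lemma sum_kdelta: "v \<in> {1..q} \<Longrightarrow> (\<Sum>t\<in>{1..q}. kdelta v t) = 1"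
  unfolding kdelta_def by simp

lemma sum_kdelta_mult: "u \<in> {1..q} \<Longrightarrow> (\<Sum>t\<in>{1..q}. kdelta u t * kdelta v t) = kdelta u v"
  unfolding kdelta_def by (simp add: if_distrib[of "\<lambda>x. x * _"] cong: if_cong)

lemma sum_emp_measure:
  assumes "\<Sigma> \<in> replicas q N R" "1 \<le> N"
  shows "(\<Sum>s\<in>PiE {..<R} (\<lambda>_. {1..q}). emp_measure N R \<Sigma> s) = 1"
proof -
  have "(\<Sum>s\<in>PiE {..<R} (\<lambda>_. {1..q}). \<Prod>r<R. kdelta (\<Sigma> r i) (s r)) = 1" if "i < N" for i
    using replica_spin[OF assms(1) _ that] sum_kdelta
    by (subst prod_sum_PiE[symmetric]) auto
  then show ?thesis
    using assms(2) unfolding emp_measure_def sum_distrib_left[symmetric]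
    by (subst sum.swap) simp
qed

lemma sum_emp_measure_square:
  assumes "\<Sigma> \<in> replicas q N R"
  shows "(\<Sum>s\<in>PiE {..<R} (\<lambda>_. {1..q}). (emp_measure N R \<Sigma> s)^2) =
     1 / real N ^ 2 * (\<Sum>p\<in>{..<N}\<times>{..<N}. \<Prod>r<R. kdelta (\<Sigma> r (fst p)) (\<Sigma> r (snd p)))"
proof -
  let ?S = "PiE {..<R} (\<lambda>_. {1..q})"
  let ?F = "\<lambda>i j s. (\<Prod>r<R. kdelta (\<Sigma> r i) (s r)) * (\<Prod>r<R. kdelta (\<Sigma> r j) (s r))"
  have inner: "(\<Sum>s\<in>?S. ?F i j s) = (\<Prod>r<R. kdelta (\<Sigma> r i) (\<Sigma> r j))" if "i < N" for i j
  proof -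
    have "(\<Sum>s\<in>?S. ?F i j s) = (\<Prod>r<R. \<Sum>t\<in>{1..q}. kdelta (\<Sigma> r i) t * kdelta (\<Sigma> r j) t)"
      by (simp add: prod.distrib[symmetric] prod_sum_PiE)
    also have "\<dots> = (\<Prod>r<R. kdelta (\<Sigma> r i) (\<Sigma> r j))"
      using replica_spin[OF assms _ that] sum_kdelta_mult by (intro prod.cong) auto
    finally show ?thesis .
  qed
  have "(emp_measure N R \<Sigma> s)^2 = 1 / real N ^ 2 * (\<Sum>i<N. \<Sum>j<N. ?F i j s)" for s
    unfolding emp_measure_def power2_eq_square by (simp add: sum_product)
  then have "(\<Sum>s\<in>?S. (emp_measure N R \<Sigma> s)^2) = 1 / real N ^ 2 * (\<Sum>s\<in>?S. \<Sum>i<N. \<Sum>j<N. ?F i j s)"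
    by (simp add: sum_distrib_left)
  also have "(\<Sum>s\<in>?S. \<Sum>i<N. \<Sum>j<N. ?F i j s) = (\<Sum>i<N. \<Sum>j<N. \<Sum>s\<in>?S. ?F i j s)"
  proof -
    have "(\<Sum>s\<in>?S. \<Sum>i<N. \<Sum>j<N. ?F i j s) = (\<Sum>i<N. \<Sum>s\<in>?S. \<Sum>j<N. ?F i j s)"
      by (rule sum.swap)
    also have "\<dots> = (\<Sum>i<N. \<Sum>j<N. \<Sum>s\<in>?S. ?F i j s)"
      by (rule sum.cong[OF refl], rule sum.swap)
    finally show ?thesis .
  qed
  also have "\<dots> = (\<Sum>i<N. \<Sum>j<N. \<Prod>r<R. kdelta (\<Sigma> r i) (\<Sigma> r j))"
    using inner by simp
  finally show ?thesis by (simp add: sum.cartesian_product case_prod_beta)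
qed

lemma sum_replica_coincidence:
  "(\<Sum>\<Sigma>\<in>replicas q N R. (\<Prod>r<R. gibbs q N M (\<Sigma> r)) * (\<Prod>r<R. kdelta (\<Sigma> r (fst p)) (\<Sigma> r (snd p))))
     = coincidence q N M p ^ R"
proof -
  have "(\<Sum>\<Sigma>\<in>replicas q N R. (\<Prod>r<R. gibbs q N M (\<Sigma> r)) * (\<Prod>r<R. kdelta (\<Sigma> r (fst p)) (\<Sigma> r (snd p))))
      = (\<Sum>\<Sigma>\<in>replicas q N R. \<Prod>r<R. gibbs q N M (\<Sigma> r) * kdelta (\<Sigma> r (fst p)) (\<Sigma> r (snd p)))"
    by (simp add: prod.distrib)
  also have "\<dots> = (\<Prod>r<R. \<Sum>\<sigma>\<in>configs q N. gibbs q N M \<sigma> * kdelta (\<sigma> (fst p)) (\<sigma> (snd p)))"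
    unfolding replicas_def by (rule prod_sum_PiE[symmetric]) (auto simp: finite_configs)
  finally show ?thesis by (simp add: coincidence_def)
qed

lemma sum_replica_fluctuation:
  assumes q: "1 \<le> q" and N: "1 \<le> N"
  shows "(\<Sum>s\<in>PiE {..<R} (\<lambda>_. {1..q}). replica_fluctuation q N R s M) = overlap_moment q N M R"
proof -
  let ?S = "PiE {..<R} (\<lambda>_. {1..q})"
  let ?c = "1 / real q ^ R"
  let ?w = "\<lambda>\<Sigma>. \<Prod>r<R. gibbs q N M (\<Sigma> r)"
  let ?\<delta> = "\<lambda>\<Sigma> p. \<Prod>r<R. kdelta (\<Sigma> r (fst p)) (\<Sigma> r (snd p))"
  have "(\<Sum>s\<in>?S. (emp_measure N R \<Sigma> s - ?c)^2) = 1 / real N ^ 2 * (\<Sum>p\<in>{..<N}\<times>{..<N}. ?\<delta> \<Sigma> p) - ?c"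
    if "\<Sigma> \<in> replicas q N R" for \<Sigma>
  proof -
    have "(\<Sum>s\<in>?S. (emp_measure N R \<Sigma> s - ?c)^2)
        = (\<Sum>s\<in>?S. (emp_measure N R \<Sigma> s)^2) - 2 * ?c * (\<Sum>s\<in>?S. emp_measure N R \<Sigma> s) + ?c^2 * real (card ?S)"
      by (simp add: power2_diff sum_subtractf sum.distrib sum_distrib_left)
    moreover have "?c ^ 2 * real (card ?S) = ?c" using q by (simp add: card_PiE power2_eq_square)
    ultimately show ?thesis
      using sum_emp_measure[OF that N] sum_emp_measure_square[OF that] by simp
  qed
  then have "(\<Sum>s\<in>?S. replica_fluctuation q N R s M)
      = (\<Sum>\<Sigma>\<in>replicas q N R. (1 / real N ^ 2 * (\<Sum>p\<in>{..<N}\<times>{..<N}. ?\<delta> \<Sigma> p) - ?c) * ?w \<Sigma>)"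
    unfolding replica_fluctuation_def by (subst sum.swap) (simp add: sum_distrib_right[symmetric])
  also have "\<dots> = (\<Sum>\<Sigma>\<in>replicas q N R. 1 / real N ^ 2 * (\<Sum>p\<in>{..<N}\<times>{..<N}. ?w \<Sigma> * ?\<delta> \<Sigma> p) - ?c * ?w \<Sigma>)"
    by (simp only: left_diff_distrib right_diff_distrib sum_distrib_left sum_distrib_right mult.assoc mult.commute mult.left_commute)
  also have "\<dots> = 1 / real N ^ 2 * (\<Sum>\<Sigma>\<in>replicas q N R. \<Sum>p\<in>{..<N}\<times>{..<N}. ?w \<Sigma> * ?\<delta> \<Sigma> p)
      - ?c * (\<Sum>\<Sigma>\<in>replicas q N R. ?w \<Sigma>)"
    by (simp only: sum_subtractf sum_distrib_left)
  finally show ?thesis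
    by (simp add: sum.swap[where A = "replicas q N R"] sum_replica_coincidence sum_replica_weights[OF q]
        overlap_moment_def)
qed

lemma emp_measure_bounds:
  assumes "1 \<le> N"
  shows "0 \<le> emp_measure N R \<Sigma> s" "emp_measure N R \<Sigma> s \<le> 1"
proof -
  have b: "0 \<le> (\<Prod>r<R. kdelta (\<Sigma> r i) (s r))" "(\<Prod>r<R. kdelta (\<Sigma> r i) (s r)) \<le> 1" for i
    using kdelta_bounds by (auto intro!: prod_nonneg prod_le_1)
  have "(\<Sum>i<N. \<Prod>r<R. kdelta (\<Sigma> r i) (s r)) \<le> (\<Sum>i<N. 1)" using b by (intro sum_mono) auto
  then show "0 \<le> emp_measure N R \<Sigma> s" "emp_measure N R \<Sigma> s \<le> 1"
    unfolding emp_measure_def using b assms by (auto simp: divide_le_eq sum_nonneg)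
qed

lemma abs_diff_le_1: "0 \<le> a \<Longrightarrow> a \<le> 1 \<Longrightarrow> 0 \<le> b \<Longrightarrow> b \<le> 1 \<Longrightarrow> \<bar>a - b\<bar> \<le> (1::real)"
  by linarith

lemma replica_fluctuation_bounds:
  assumes "1 \<le> q" "1 \<le> N"
  shows "0 \<le> replica_fluctuation q N R s M" "replica_fluctuation q N R s M \<le> 1"
proof -
  let ?w = "\<lambda>\<Sigma>. \<Prod>r<R. gibbs q N M (\<Sigma> r)"
  have w: "0 \<le> ?w \<Sigma>" for \<Sigma> using gibbs_nonneg[OF assms(1)] by (intro prod_nonneg) auto
  show "0 \<le> replica_fluctuation q N R s M"
    unfolding replica_fluctuation_def using w by (intro sum_nonneg mult_nonneg_nonneg) auto
  have "(emp_measure N R \<Sigma> s - 1 / real q ^ R)^2 \<le> 1" for \<Sigma>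
    using emp_measure_bounds[OF assms(2)] assms(1)
    by (subst abs_square_le_1) (intro abs_diff_le_1, auto)
  then have "replica_fluctuation q N R s M \<le> (\<Sum>\<Sigma>\<in>replicas q N R. 1 * ?w \<Sigma>)"
    unfolding replica_fluctuation_def using w by (intro sum_mono mult_right_mono) auto
  then show "replica_fluctuation q N R s M \<le> 1" using sum_replica_weights[OF assms(1)] by simp
qed

lemma abs_overlap_moment_le_1:
  assumes "1 \<le> q" "1 \<le> N"
  shows "\<bar>overlap_moment q N M R\<bar> \<le> 1"
proof -
  have a: "0 \<le> coincidence q N M p ^ R" "coincidence q N M p ^ R \<le> 1" for p
    using coincidence_bounds[OF assms(1), of N M p] by (auto intro: power_le_one)
  have "(\<Sum>p\<in>{..<N}\<times>{..<N}. coincidence q N M p ^ R) \<le> (\<Sum>p\<in>{..<N}\<times>{..<N}. 1)"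
    using a by (intro sum_mono) auto
  then have "1 / real N ^ 2 * (\<Sum>p\<in>{..<N}\<times>{..<N}. coincidence q N M p ^ R) \<le> 1"
    using assms(2) by (simp add: power2_eq_square divide_le_eq)
  moreover have "0 \<le> 1 / real N ^ 2 * (\<Sum>p\<in>{..<N}\<times>{..<N}. coincidence q N M p ^ R)"
    using a by (simp add: sum_nonneg)
  ultimately show ?thesis
    unfolding overlap_moment_def using assms(1) by (intro abs_diff_le_1) auto
qed

section \<open>The pressure as a function of the connectivity\<close>

lemma E_Nc_eq_poisson_expectation:
  "E_Nc N c F = poisson_expectation ({..<N}\<times>{..<N}) (c / (2 * real N)) F"
  by (simp add: E_Nc_def J_law_def poisson_expectation_def poisson_field_def)

lemma E_Nc_has_derivative:
  assumes N: "1 \<le> N" and "linear_growth ({..<N}\<times>{..<N}) K F" "0 \<le> C" "c \<in> {0..C}"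
  shows "((\<lambda>c. E_Nc N c F) has_field_derivative
     (\<Sum>b\<in>{..<N}\<times>{..<N}. E_Nc N c (increment b F)) / (2 * real N)) (at c within {0..C})"
proof -
  let ?A = "{..<N}\<times>{..<N}"
  let ?g = "\<lambda>c. c / (2 * real N)"
  have Np: "0 < real N" using N by simp
  have "((\<lambda>l. poisson_expectation ?A l F) has_field_derivative (\<Sum>b\<in>?A. E_Nc N c (increment b F)))
      (at (?g c) within {0..C / (2 * real N)})"
    unfolding E_Nc_eq_poisson_expectation
    using assms Np by (intro poisson_expectation_has_derivative) (auto simp: divide_right_mono)
  then have "((\<lambda>l. poisson_expectation ?A l F) has_field_derivative (\<Sum>b\<in>?A. E_Nc N c (increment b F)))
      (at (?g c) within ?g ` {0..C})"
    by (rule has_field_derivative_subset) (use Np in \<open>auto simp: divide_right_mono\<close>)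
  moreover have "(?g has_field_derivative 1 / (2 * real N)) (at c within {0..C})"
    using Np by (auto intro!: derivative_eq_intros)
  ultimately have "((\<lambda>l. poisson_expectation ?A l F) \<circ> ?g has_field_derivative
      (\<Sum>b\<in>?A. E_Nc N c (increment b F)) * (1 / (2 * real N))) (at c within {0..C})"
    by (rule DERIV_image_chain)
  then show ?thesis by (simp add: o_def E_Nc_eq_poisson_expectation)
qed

lemma continuous_on_E_Nc:
  assumes "1 \<le> N" "linear_growth ({..<N}\<times>{..<N}) K F" "0 \<le> C"
  shows "continuous_on {0..C} (\<lambda>c. E_Nc N c F)"
  unfolding continuous_on_eq_continuous_within
  using E_Nc_has_derivative[OF assms] DERIV_continuous by blast

lemma abs_E_Nc_le:
  assumes "\<And>J. \<bar>F J\<bar> \<le> B"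
  shows "\<bar>E_Nc N c F\<bar> \<le> B"
proof -
  have "integrable (J_law N c) F"
    using assms by (intro measure_pmf.integrable_const_bound[where B = B]) auto
  then have "\<bar>E_Nc N c F\<bar> \<le> measure_pmf.expectation (J_law N c) (\<lambda>_. B)"
    unfolding E_Nc_def using assms
    by (intro order.trans[OF integral_abs_bound] integral_mono) auto
  then show ?thesis by simp
qed

definition log_partition_per_site :: "nat \<Rightarrow> nat \<Rightarrow> real \<Rightarrow> (nat \<times> nat \<Rightarrow> nat) \<Rightarrow> real" where
  "log_partition_per_site q N \<beta> J = ln (partition_fn q N (scaled \<beta> J)) / real N"

definition edge_log_sum :: "nat \<Rightarrow> nat \<Rightarrow> real \<Rightarrow> (nat \<times> nat \<Rightarrow> nat) \<Rightarrow> real" where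
  "edge_log_sum q N \<beta> J =
     (\<Sum>p\<in>{..<N}\<times>{..<N}. ln (1 - (1 - exp (- \<beta>)) * coincidence q N (scaled \<beta> J) p))"

definition pressure_gap_rate :: "nat \<Rightarrow> nat \<Rightarrow> real \<Rightarrow> real \<Rightarrow> real" where
  "pressure_gap_rate q N \<beta> c =
     1 / 2 * ln (1 - (1 - exp (- \<beta>)) / real q) - E_Nc N c (edge_log_sum q N \<beta>) / (2 * real N ^ 2)"

context
  fixes q N :: nat and \<beta> :: real
  assumes q: "1 \<le> q" and N: "1 \<le> N" and \<beta>: "0 \<le> \<beta>"
begin

lemma partition_fn_scaled_bounds:
  "real q ^ N * exp (- (\<beta> * (\<Sum>p\<in>{..<N}\<times>{..<N}. real (J p)))) \<le> partition_fn q N (scaled \<beta> J)"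
  "partition_fn q N (scaled \<beta> J) \<le> real q ^ N"
proof -
  let ?S = "\<Sum>p\<in>{..<N}\<times>{..<N}. real (J p)"
  have H: "0 \<le> hamiltonian N \<sigma> (scaled \<beta> J)" "hamiltonian N \<sigma> (scaled \<beta> J) \<le> \<beta> * ?S" for \<sigma>
    unfolding hamiltonian_eq_sum_edges scaled_def sum_distrib_left
    using \<beta> kdelta_bounds by (auto intro!: sum_nonneg sum_mono mult_left_le)
  have "(\<Sum>\<sigma>\<in>configs q N. exp (- (\<beta> * ?S))) \<le> partition_fn q N (scaled \<beta> J)"
    unfolding partition_fn_def using H(2) by (intro sum_mono) simp
  then show "real q ^ N * exp (- (\<beta> * ?S)) \<le> partition_fn q N (scaled \<beta> J)"
    by (simp add: card_configs)
  have "partition_fn q N (scaled \<beta> J) \<le> (\<Sum>\<sigma>\<in>configs q N. 1)"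
    unfolding partition_fn_def using H(1) by (intro sum_mono) simp
  then show "partition_fn q N (scaled \<beta> J) \<le> real q ^ N"
    by (simp add: card_configs)
qed

lemma linear_growth_log_partition_per_site:
  "linear_growth ({..<N}\<times>{..<N}) (ln q + \<beta>) (log_partition_per_site q N \<beta>)"
  unfolding linear_growth_def
proof
  fix J
  let ?S = "\<Sum>p\<in>{..<N}\<times>{..<N}. real (J p)"
  let ?Z = "partition_fn q N (scaled \<beta> J)"
  have S: "0 \<le> ?S" and lq: "0 \<le> ln (real q)" using q by (auto simp: sum_nonneg)
  have Z: "0 < ?Z" by (rule partition_fn_pos[OF q])
  have "ln ?Z \<le> real N * ln q"
    using partition_fn_scaled_bounds(2) Z q by (simp add: ln_realpow[symmetric])
  moreover have "real N * ln q - \<beta> * ?S \<le> ln ?Z"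
    using ln_le_cancel_iff[THEN iffD2, OF _ Z partition_fn_scaled_bounds(1)] q
    by (simp add: ln_mult ln_realpow)
  moreover have "\<beta> * ?S \<le> real N * (\<beta> * ?S)"
    using mult_right_mono[of 1 "real N" "\<beta> * ?S"] N \<beta> S by simp
  moreover have "0 \<le> real N * ln q" using lq by simp
  ultimately have "\<bar>ln ?Z\<bar> \<le> real N * ln q + real N * (\<beta> * ?S)"
    unfolding abs_le_iff by linarith
  also have "\<dots> \<le> real N * ((ln q + \<beta>) * (1 + ?S))"
    using lq \<beta> S by (simp add: algebra_simps)
  finally show "\<bar>log_partition_per_site q N \<beta> J\<bar> \<le> (ln q + \<beta>) * (1 + ?S)"
    using N by (simp add: log_partition_per_site_def divide_le_eq mult.commute)
qed

lemma increment_log_partition_per_site: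
  "p \<in> {..<N}\<times>{..<N} \<Longrightarrow> increment p (log_partition_per_site q N \<beta>) J
     = ln (1 - (1 - exp (- \<beta>)) * coincidence q N (scaled \<beta> J) p) / real N"
  unfolding increment_def log_partition_per_site_def
  using ln_partition_fn_increment[OF q _ \<beta>] by (simp add: diff_divide_distrib[symmetric])

lemma abs_ln_coincidence_factor_le:
  "\<bar>ln (1 - (1 - exp (- \<beta>)) * coincidence q N M p)\<bar> \<le> \<beta>"
  using log_factor_bounds(2,3)[OF \<beta> coincidence_bounds[OF q, of N M p]]
  unfolding abs_le_iff by linarith

lemma integrable_edge_log_sum: "integrable (J_law N c) (edge_log_sum q N \<beta>)"
proof -
  have "\<bar>edge_log_sum q N \<beta> J\<bar> \<le> (\<Sum>p\<in>{..<N}\<times>{..<N}. \<beta>)" for J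
    unfolding edge_log_sum_def by (intro order.trans[OF sum_abs] sum_mono abs_ln_coincidence_factor_le)
  then show ?thesis
    by (intro measure_pmf.integrable_const_bound[where B = "\<Sum>p\<in>{..<N}\<times>{..<N}. \<beta>"]) auto
qed

lemma pressure_has_derivative:
  assumes "0 \<le> C" "c \<in> {0..C}"
  shows "((\<lambda>c. pressure q N \<beta> c) has_field_derivative
      E_Nc N c (edge_log_sum q N \<beta>) / (2 * real N ^ 2)) (at c within {0..C})"
proof -
  let ?A = "{..<N}\<times>{..<N}"
  let ?f = "\<lambda>p J. ln (1 - (1 - exp (- \<beta>)) * coincidence q N (scaled \<beta> J) p)"
  have "integrable (J_law N c) (?f p)" for p
    using abs_ln_coincidence_factor_le
    by (intro measure_pmf.integrable_const_bound[where B = \<beta>]) auto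
  then have "E_Nc N c (edge_log_sum q N \<beta>) = (\<Sum>p\<in>?A. E_Nc N c (?f p))"
    unfolding E_Nc_def edge_log_sum_def by (rule Bochner_Integration.integral_sum)
  moreover have "E_Nc N c (increment p (log_partition_per_site q N \<beta>)) = E_Nc N c (?f p) / real N"
    if "p \<in> ?A" for p
  proof -
    have "increment p (log_partition_per_site q N \<beta>) = (\<lambda>J. ?f p J / real N)"
      using that by (simp add: fun_eq_iff increment_log_partition_per_site)
    then show ?thesis by (simp add: E_Nc_def)
  qed
  ultimately have "(\<Sum>p\<in>?A. E_Nc N c (increment p (log_partition_per_site q N \<beta>)))
      = E_Nc N c (edge_log_sum q N \<beta>) / real N"
    by (simp add: sum_divide_distrib)
  then show ?thesis
    using E_Nc_has_derivative[OF N linear_growth_log_partition_per_site assms]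
    by (simp add: pressure_def log_partition_per_site_def[abs_def] power2_eq_square mult_ac)
qed

lemma pressure_gap_has_integral:
  assumes c: "0 \<le> c"
  shows "(pressure_gap_rate q N \<beta> has_integral (annealed_pressure q \<beta> c - pressure q N \<beta> c)) {0..c}"
proof -
  have "pressure q N \<beta> 0 = ln (real q)"
    using q N by (simp add: pressure_def E_Nc_eq_poisson_expectation poisson_expectation_def
        poisson_field_def poisson_dist_def scaled_def partition_fn_def hamiltonian_def card_configs ln_realpow)
  moreover have "annealed_pressure q \<beta> 0 = ln (real q)"
    by (simp add: annealed_pressure_def)
  moreover have "((\<lambda>c. annealed_pressure q \<beta> c - pressure q N \<beta> c) has_vector_derivative pressure_gap_rate q N \<beta> x)
      (at x within {0..c})" if "x \<in> {0..c}" for x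
    unfolding pressure_gap_rate_def annealed_pressure_def has_real_derivative_iff_has_vector_derivative[symmetric]
    by (auto intro!: derivative_eq_intros pressure_has_derivative[OF c that])
  ultimately show ?thesis
    using fundamental_theorem_of_calculus[OF c] by fastforce
qed

end

section \<open>Expansion in replica overlaps\<close>

lemma ln_one_minus_sums:
  fixes y :: real
  assumes "\<bar>y\<bar> < 1"
  shows "(\<lambda>R. y ^ Suc R / real (Suc R)) sums (- ln (1 - y))"
proof -
  have "(\<lambda>n. - ((- (- y)) ^ n) / real n) sums ln (1 + - y)"
    by (rule ln_series') (use assms in auto)
  then have "(\<lambda>n. y ^ n / real n) sums (- ln (1 - y))"
    using sums_minus by fastforce
  then show ?thesis
    using sums_Suc_iff[of "\<lambda>n. y ^ n / real n"] by simp
qed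

lemma overlap_moment_sums:
  fixes x :: real
  assumes q: "1 \<le> q" and x: "0 \<le> x" "x < 1"
  shows "(\<lambda>R. x ^ Suc R / real (Suc R) * overlap_moment q N M (Suc R)) sums
    (ln (1 - x / real q) - (\<Sum>p\<in>{..<N}\<times>{..<N}. ln (1 - x * coincidence q N M p)) / real N ^ 2)"
proof -
  let ?A = "{..<N}\<times>{..<N}"
  have "\<bar>x * coincidence q N M p\<bar> < 1" for p
    using coincidence_bounds[OF q, of N M p] x mult_left_le[of "coincidence q N M p" x]
    by (simp add: abs_mult)
  then have "(\<lambda>R. 1 / real N ^ 2 * (\<Sum>p\<in>?A. (x * coincidence q N M p) ^ Suc R / real (Suc R))
      - (x / real q) ^ Suc R / real (Suc R))
      sums (1 / real N ^ 2 * (\<Sum>p\<in>?A. - ln (1 - x * coincidence q N M p)) - - ln (1 - x / real q))"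
    using q x by (intro sums_diff sums_mult sums_sum ln_one_minus_sums) (auto simp: divide_less_eq)
  moreover have "1 / real N ^ 2 * (\<Sum>p\<in>?A. (x * coincidence q N M p) ^ Suc R / real (Suc R))
      - (x / real q) ^ Suc R / real (Suc R) = x ^ Suc R / real (Suc R) * overlap_moment q N M (Suc R)" for R
  proof -
    have "(\<Sum>p\<in>?A. (x * coincidence q N M p) ^ Suc R / real (Suc R))
        = x ^ Suc R / real (Suc R) * (\<Sum>p\<in>?A. coincidence q N M p ^ Suc R)"
      by (simp add: power_mult_distrib sum_distrib_left mult_ac)
    then show ?thesis by (simp add: overlap_moment_def power_divide algebra_simps)
  qed
  ultimately show ?thesis by (simp add: sum_negf)
qed

lemma divide_le_self: "0 \<le> a \<Longrightarrow> 1 \<le> d \<Longrightarrow> a / d \<le> (a::real)"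
  using frac_le[of a a 1 d] by simp

lemma expectation_sums_dominated:
  fixes p :: "'a pmf" and f :: "nat \<Rightarrow> 'a \<Rightarrow> real"
  assumes bound: "\<And>i x. \<bar>f i x\<bar> \<le> B i" and "summable B" and sums: "\<And>x. (\<lambda>i. f i x) sums g x"
  shows "(\<lambda>i. measure_pmf.expectation p (f i)) sums measure_pmf.expectation p g"
proof -
  have int: "integrable p (f i)" for i
    using bound by (intro measure_pmf.integrable_const_bound[where B = "B i"]) auto
  have "(\<lambda>i. measure_pmf.expectation p (f i)) sums (\<integral>x. (\<Sum>i. f i x) \<partial>p)"
  proof (rule sums_integral[OF int])
    show "AE x in p. summable (\<lambda>i. norm (f i x))"
      using bound by (intro AE_I2 summable_comparison_test'[OF \<open>summable B\<close>]) auto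
    have "(\<integral>x. norm (f i x) \<partial>p) \<le> (\<integral>x. B i \<partial>p)" for i
      using int bound by (intro integral_mono) auto
    then have "norm (\<integral>x. norm (f i x) \<partial>p) \<le> B i" for i
      by simp
    then show "summable (\<lambda>i. \<integral>x. norm (f i x) \<partial>p)"
      by (rule summable_comparison_test'[OF \<open>summable B\<close>])
  qed
  then show ?thesis using sums by (simp add: sums_iff)
qed

lemma integral_sums_dominated:
  fixes u :: "nat \<Rightarrow> real \<Rightarrow> real"
  assumes cont: "\<And>R. continuous_on {a..b} (u R)"
    and bound: "\<And>R x. x \<in> {a..b} \<Longrightarrow> \<bar>u R x\<bar> \<le> B R" and "summable B"
    and sums: "\<And>x. x \<in> {a..b} \<Longrightarrow> (\<lambda>R. u R x) sums g x"
  shows "(\<lambda>R. integral {a..b} (u R)) sums integral {a..b} g"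
proof -
  have int: "u R integrable_on {a..b}" for R
    by (rule integrable_continuous_interval[OF cont])
  have "(\<lambda>k. integral {a..b} (\<lambda>x. \<Sum>R<k. u R x)) \<longlonglongrightarrow> integral {a..b} g"
  proof (rule dominated_convergence(2)[where h = "\<lambda>_. suminf B"])
    show "(\<lambda>x. \<Sum>R<k. u R x) integrable_on {a..b}" for k
      using int by (intro integrable_sum) auto
    show "(\<lambda>_. suminf B) integrable_on {a..b}" by (rule integrable_const_ivl)
    show "norm (\<Sum>R<k. u R x) \<le> suminf B" if x: "x \<in> {a..b}" for k x
    proof -
      have "norm (\<Sum>R<k. u R x) \<le> (\<Sum>R<k. B R)"
        using bound[OF x] by (intro order.trans[OF norm_sum] sum_mono) auto
      also have "\<dots> \<le> suminf B"
        using bound[OF x] by (intro sum_le_suminf \<open>summable B\<close>) (auto intro: order.trans[OF abs_ge_zero])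
      finally show ?thesis .
    qed
    show "(\<lambda>k. \<Sum>R<k. u R x) \<longlonglongrightarrow> g x" if "x \<in> {a..b}" for x
      using sums[OF that] by (simp add: sums_def)
  qed
  then show ?thesis
    using int by (simp add: sums_def integral_sum)
qed

definition replica_term :: "nat \<Rightarrow> nat \<Rightarrow> real \<Rightarrow> nat \<Rightarrow> real \<Rightarrow> real" where
  "replica_term q N \<beta> R c = 1 / 2 * ((1 - exp (- \<beta>)) ^ Suc R / real (Suc R)) *
     (\<Sum>s\<in>PiE {..<Suc R} (\<lambda>_. {1..q}). replica_avg q N \<beta> c (Suc R)
        (\<lambda>\<Sigma>. (emp_measure N (Suc R) \<Sigma> s - 1 / real q ^ Suc R)^2))"

context
  fixes q N :: nat and \<beta> :: real
  assumes q: "1 \<le> q" and N: "1 \<le> N" and \<beta>: "0 \<le> \<beta>"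
begin

lemma replica_term_eq:
  "replica_term q N \<beta> R c = 1 / 2 * ((1 - exp (- \<beta>)) ^ Suc R / real (Suc R)) *
     E_Nc N c (\<lambda>J. overlap_moment q N (scaled \<beta> J) (Suc R))"
proof -
  let ?S = "PiE {..<Suc R} (\<lambda>_. {1..q})"
  have "integrable (J_law N c) (\<lambda>J. replica_fluctuation q N (Suc R) s (scaled \<beta> J))" for s
    using replica_fluctuation_bounds[OF q N]
    by (intro measure_pmf.integrable_const_bound[where B = 1]) auto
  then have "(\<Sum>s\<in>?S. E_Nc N c (\<lambda>J. replica_fluctuation q N (Suc R) s (scaled \<beta> J)))
      = E_Nc N c (\<lambda>J. \<Sum>s\<in>?S. replica_fluctuation q N (Suc R) s (scaled \<beta> J))"
    unfolding E_Nc_def by (rule Bochner_Integration.integral_sum[symmetric])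
  also have "\<dots> = E_Nc N c (\<lambda>J. overlap_moment q N (scaled \<beta> J) (Suc R))"
    by (simp only: sum_replica_fluctuation[OF q N])
  finally show ?thesis
    unfolding replica_term_def replica_avg_eq_replica_fluctuation by simp
qed

lemma replica_term_nonneg: "0 \<le> replica_term q N \<beta> R c"
  unfolding replica_term_def replica_avg_eq_replica_fluctuation E_Nc_def
  using \<beta> replica_fluctuation_bounds[OF q N]
  by (intro mult_nonneg_nonneg sum_nonneg Bochner_Integration.integral_nonneg) auto

lemma abs_replica_term_le: "\<bar>replica_term q N \<beta> R c\<bar> \<le> (1 - exp (- \<beta>)) ^ Suc R / 2"
proof -
  let ?x = "1 - exp (- \<beta>)"
  have x: "0 \<le> ?x ^ Suc R" using \<beta> by simp
  have E: "\<bar>E_Nc N c (\<lambda>J. overlap_moment q N (scaled \<beta> J) (Suc R))\<bar> \<le> 1"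
    by (rule abs_E_Nc_le) (rule abs_overlap_moment_le_1[OF q N])
  have k: "0 \<le> 1 / 2 * (?x ^ Suc R / real (Suc R))" using x by simp
  have "\<bar>replica_term q N \<beta> R c\<bar> \<le> 1 / 2 * (?x ^ Suc R / real (Suc R))"
    unfolding replica_term_eq by (subst abs_mult, subst abs_of_nonneg[OF k]) (rule mult_left_le[OF E k])
  also have "\<dots> \<le> 1 / 2 * ?x ^ Suc R"
    using divide_le_self[OF x, of "real (Suc R)"] by (intro mult_left_mono) auto
  finally show ?thesis by simp
qed

lemma continuous_on_replica_term: "0 \<le> C \<Longrightarrow> continuous_on {0..C} (replica_term q N \<beta> R)"
  unfolding replica_term_def[abs_def] replica_avg_eq_replica_fluctuation
  using replica_fluctuation_bounds[OF q N]
  by (intro continuous_on_mult_left continuous_on_sum continuous_on_E_Nc[OF N linear_growth_of_bounded])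
     (auto simp: abs_le_iff)

lemma integral_replica_term:
  assumes "0 \<le> c"
  shows "integral {0..c} (replica_term q N \<beta> R) = 1 / 2 * ((1 - exp (- \<beta>)) ^ Suc R / real (Suc R)) *
     (\<Sum>s\<in>PiE {..<Suc R} (\<lambda>_. {1..q}). integral {0..c} (\<lambda>c'. replica_avg q N \<beta> c' (Suc R)
        (\<lambda>\<Sigma>. (emp_measure N (Suc R) \<Sigma> s - 1 / real q ^ Suc R)^2)))"
proof -
  have int: "(\<lambda>c'. replica_avg q N \<beta> c' (Suc R) (\<lambda>\<Sigma>. (emp_measure N (Suc R) \<Sigma> s - 1 / real q ^ Suc R)^2))
      integrable_on {0..c}" for s
    unfolding replica_avg_eq_replica_fluctuation using replica_fluctuation_bounds[OF q N]
    by (intro integrable_continuous_interval continuous_on_E_Nc[OF N linear_growth_of_bounded assms])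
       (auto simp: abs_le_iff)
  show ?thesis
    unfolding replica_term_def[abs_def]
    by (subst integral_mult_right, subst integral_sum) (use int in \<open>auto intro: finite_PiE\<close>)
qed

lemma replica_term_sums: "(\<lambda>R. replica_term q N \<beta> R c) sums pressure_gap_rate q N \<beta> c"
proof -
  let ?x = "1 - exp (- \<beta>)"
  have x: "0 \<le> ?x" "?x < 1" using \<beta> by auto
  have "\<bar>?x ^ Suc R / real (Suc R) * overlap_moment q N M (Suc R)\<bar> \<le> ?x ^ Suc R" for M R
  proof -
    have k: "0 \<le> ?x ^ Suc R / real (Suc R)" using x by simp
    have "\<bar>?x ^ Suc R / real (Suc R) * overlap_moment q N M (Suc R)\<bar> \<le> ?x ^ Suc R / real (Suc R)"
      unfolding abs_mult abs_of_nonneg[OF k] by (rule mult_left_le[OF abs_overlap_moment_le_1[OF q N] k])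
    also have "\<dots> \<le> ?x ^ Suc R" using x by (intro divide_le_self) auto
    finally show ?thesis .
  qed
  moreover have "summable (\<lambda>R. ?x ^ Suc R)"
    using x by (simp add: summable_geometric)
  ultimately have "(\<lambda>R. E_Nc N c (\<lambda>J. ?x ^ Suc R / real (Suc R) * overlap_moment q N (scaled \<beta> J) (Suc R)))
      sums E_Nc N c (\<lambda>J. ln (1 - ?x / real q) - edge_log_sum q N \<beta> J / real N ^ 2)"
    unfolding E_Nc_def edge_log_sum_def
    by (intro expectation_sums_dominated overlap_moment_sums[OF q x])
  moreover have "E_Nc N c (\<lambda>J. ln (1 - ?x / real q) - edge_log_sum q N \<beta> J / real N ^ 2)
      = ln (1 - ?x / real q) - E_Nc N c (edge_log_sum q N \<beta>) / real N ^ 2"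
    using integrable_edge_log_sum[OF q N \<beta>] by (simp add: E_Nc_def)
  ultimately have "(\<lambda>R. 1 / 2 * E_Nc N c (\<lambda>J. ?x ^ Suc R / real (Suc R) * overlap_moment q N (scaled \<beta> J) (Suc R)))
      sums (1 / 2 * (ln (1 - ?x / real q) - E_Nc N c (edge_log_sum q N \<beta>) / real N ^ 2))"
    by (intro sums_mult) simp
  then show ?thesis
    by (simp add: replica_term_eq pressure_gap_rate_def E_Nc_def mult.assoc diff_divide_distrib)
       (simp add: mult.commute[of _ 2])
qed

end

theorem mainTheorem4:
  fixes q N :: nat and \<beta> c :: real
  assumes "q \<ge> 2" and "N \<ge> 1" and "\<beta> \<ge> 0" and "c \<ge> 0"
  shows "(\<lambda>R. 1 / 2 * ((1 - exp (- \<beta>)) ^ Suc R / real (Suc R)) *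
            (\<Sum>s\<in>PiE {..<Suc R} (\<lambda>_. {1..q}).
               integral {0..c} (\<lambda>c'. replica_avg q N \<beta> c' (Suc R)
                  (\<lambda>\<Sigma>. (emp_measure N (Suc R) \<Sigma> s - 1 / real q ^ Suc R)^2))))
         sums (annealed_pressure q \<beta> c - pressure q N \<beta> c)
       \<and> pressure q N \<beta> c \<le> annealed_pressure q \<beta> c"
proof -
  have q: "1 \<le> q" using assms(1) by simp
  note N = assms(2) and \<beta> = assms(3) and c = assms(4)
  let ?x = "1 - exp (- \<beta>)"
  have "summable (\<lambda>R. ?x ^ Suc R / 2)"
    using \<beta> by (intro summable_divide) (simp add: summable_geometric)
  then have "(\<lambda>R. integral {0..c} (replica_term q N \<beta> R)) sums integral {0..c} (pressure_gap_rate q N \<beta>)"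
    using continuous_on_replica_term[OF q N \<beta> c] abs_replica_term_le[OF q N \<beta>] replica_term_sums[OF q N \<beta>]
    by (intro integral_sums_dominated[where B = "\<lambda>R. ?x ^ Suc R / 2"])
  then have sums: "(\<lambda>R. integral {0..c} (replica_term q N \<beta> R)) sums (annealed_pressure q \<beta> c - pressure q N \<beta> c)"
    using integral_unique[OF pressure_gap_has_integral[OF q N \<beta> c]] by simp
  have "0 \<le> integral {0..c} (replica_term q N \<beta> R)" for R
    using replica_term_nonneg[OF q N \<beta>]
    by (intro integral_nonneg integrable_continuous_interval continuous_on_replica_term[OF q N \<beta> c]) auto
  then have "pressure q N \<beta> c \<le> annealed_pressure q \<beta> c"
    using suminf_nonneg[OF sums_summable[OF sums]] sums_unique[OF sums] by simp
  with sums show ?thesis by (simp add: integral_replica_term[OF q N \<beta> c])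
qed

end
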